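(* Let $G>0$, $T>0$, let $F\colon\mathbb R\to\mathbb R^2$ be $T$-periodic and of class $C^1$, and let $a\in(0,1)$ be such that $m_a(t,x,p)=\tfrac12|x|^2-\tfrac12a^2$ is a curvature bound function for $v_\lambda$ for every $\lambda\in[0,1]$. Then there exists $b>0$ such that $\mathbb R\times(\Gamma_a\cap\Delta_b)$ is a bound set for $v_\lambda$ for all $\lambda\in[0,1]$.
   Context: Let $\Omega=\{(x,p)\in\mathbb R^2\times\mathbb R^2:|x|<1\}$ and for $\lambda\in[0,1]$ let $v_\lambda(t,x,p)=\Big(1,\ p,\ \Big(G\sqrt{1-|x|^2}-\tfrac{(x^Tp)^2}{1-|x|^2}-|p|^2\Big)x+\lambda\big((x^TF(t))x-F(t)\big)\Big)$ on $\mathbb R\times\Omega$, with local flow $\phi^\lambda$. A $C^2$ function $e$ on an open subset $W\subset\mathbb R\times\Omega$ is a curvature bound function for $v$ if for every $z\in W$ with $e(z)=0$: $De(z)v(z)=0$ implies $v(z)^TD^2e(z)v(z)+De(z)Dv(z)v(z)>0$ (derivatives in all variables $(t,x,p)$). For $0<a<1$, $b>0$: $\Gamma_a=\{(x,p)\in\mathbb R^2\times\mathbb R^2:|x|\le a\}$, $\Delta_b=\{(x,p)\in\mathbb R^2\times\mathbb R^2:|x|<1,\ b|x|+|p|\le b\}$. A closed set $E\subset\mathbb R\times\Omega$ is a bound set for $v_\lambda$ if for every $\epsilon>0$ there is no $z\in\partial E$ with $\phi^\lambda_s(z)\in E$ for all $s\in(-\epsilon,\epsilon)$. *)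

theory Defs
  imports "HOL-Analysis.Analysis"
begin

type_synonym state = "real \<times> (real^2) \<times> (real^2)"

definition Omega :: "((real^2) \<times> (real^2)) set" where
  "Omega = {(x, p). norm x < 1}"

definition Gamma :: "real \<Rightarrow> ((real^2) \<times> (real^2)) set" where
  "Gamma a = {(x, p). norm x \<le> a}"

definition Delta :: "real \<Rightarrow> ((real^2) \<times> (real^2)) set" where
  "Delta b = {(x, p). norm x < 1 \<and> b * norm x + norm p \<le> b}"

definition vfield :: "real \<Rightarrow> (real \<Rightarrow> real^2) \<Rightarrow> real \<Rightarrow> state \<Rightarrow> state" where
  "vfield G F lam z = (case z of (t, x, p) \<Rightarrow>
     (1, p,
      (G * sqrt (1 - (norm x)\<^sup>2) - (x \<bullet> p)\<^sup>2 / (1 - (norm x)\<^sup>2) - (norm p)\<^sup>2) *\<^sub>R x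
      + lam *\<^sub>R ((x \<bullet> F t) *\<^sub>R x - F t)))"

definition m_fun :: "real \<Rightarrow> state \<Rightarrow> real" where
  "m_fun a z = (case z of (t, x, p) \<Rightarrow> (norm x)\<^sup>2 / 2 - a\<^sup>2 / 2)"

definition curvature_bound_function ::
  "('a::euclidean_space \<Rightarrow> 'a) \<Rightarrow> 'a set \<Rightarrow> ('a \<Rightarrow> real) \<Rightarrow> bool" where
  "curvature_bound_function v W e \<longleftrightarrow> open W \<and>
    (\<exists>De D2e.
       (\<forall>z\<in>W. (e has_derivative blinfun_apply (De z)) (at z)) \<and>
       (\<forall>z\<in>W. (De has_derivative blinfun_apply (D2e z)) (at z)) \<and>
       continuous_on W D2e \<and>
       (\<forall>z\<in>W. e z = 0 \<longrightarrow> blinfun_apply (De z) (v z) = 0 \<longrightarrow>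
          (\<forall>Dv. (v has_derivative Dv) (at z) \<longrightarrow>
             blinfun_apply (blinfun_apply (D2e z) (v z)) (v z)
               + blinfun_apply (De z) (Dv (v z)) > 0)))"

text \<open>The flow is expressed through solutions of y' = v(y), y(0) = z (unique, as v is C^1).\<close>
definition bound_set :: "('a::real_normed_vector \<Rightarrow> 'a) \<Rightarrow> 'a set \<Rightarrow> 'a set \<Rightarrow> bool" where
  "bound_set v D E \<longleftrightarrow> E \<subseteq> D \<and> closedin (top_of_set D) E \<and>
    (\<forall>\<epsilon>>0. \<not> (\<exists>z\<in>frontier E. \<exists>y. y 0 = z \<and>
        (\<forall>s\<in>{-\<epsilon><..<\<epsilon>}. (y has_vector_derivative v (y s)) (at s) \<and> y s \<in> E)))"

end

theory Submission
  imports Defs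
begin

(* Let E = R x (Gamma_a \<inter> Delta_b) and let a trajectory y stay in E near a frontier point y(0).
   Either |x| = a there, and then m_a has a local maximum 0 along y, which the curvature bound
   condition forbids; or y(0) lies on b |x| + |p| = b, so that the gauge g = b |x| + |p| - b has a
   local maximum 0 at s = 0.  If x = 0 the linear minorant <x, p0> + <p, p0>/b of the gauge has
   derivative at least b^2 - sup |F| > 0.  If x \<noteq> 0 then g'(0) = 0 forces x \<bullet> p = O(|x|/b),
   and then g''(0) is dominated by a term of order b^3 / |x|, every other term being O(b / |x|)
   with constants depending only on G, a, sup |F| and sup |F'| (finite by periodicity);
   so g''(0) > 0 for b large, contradicting the maximum. *)

lemma periodic_add_of_int:
  assumes "\<forall>t. g (t + T) = g t"
  shows "g (s + real_of_int k * T) = g s"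
proof -
  have nat: "g (s + real n * T) = g s" for n :: nat and s
  proof (induction n)
    case 0
    then show ?case by simp
  next
    case (Suc n)
    have "g (s + real (Suc n) * T) = g ((s + real n * T) + T)" by (simp add: algebra_simps)
    also have "\<dots> = g s" using assms Suc by simp
    finally show ?case .
  qed
  show ?thesis
  proof (cases "k \<ge> 0")
    case True
    then obtain n where "k = int n" by (metis nonneg_eq_int)
    then show ?thesis using nat by simp
  next
    case False
    then obtain n where n: "k = - int n" by (metis le_cases neg_0_le_iff_le nonneg_eq_int minus_minus)
    have "g ((s - real n * T) + real n * T) = g (s - real n * T)" using nat by blast
    then show ?thesis using n by simp
  qed
qed

lemma periodic_continuous_imp_bounded:
  fixes g :: "real \<Rightarrow> 'a::real_normed_vector"
  assumes "continuous_on UNIV g" and "\<forall>t. g (t + T) = g t" and "0 < T"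
  obtains M where "\<And>t. norm (g t) \<le> M"
proof -
  have "compact (g ` {0..T})"
    using assms(1) by (intro compact_continuous_image) (auto intro: continuous_on_subset)
  then obtain M where M: "\<forall>x\<in>g ` {0..T}. norm x \<le> M"
    using compact_imp_bounded bounded_iff by metis
  have "norm (g t) \<le> M" for t
  proof -
    define k where "k = \<lfloor>t / T\<rfloor>"
    define s where "s = t - real_of_int k * T"
    have "real_of_int k \<le> t / T" "t / T < real_of_int k + 1" using k_def by linarith+
    then have "real_of_int k * T \<le> t" "t < (real_of_int k + 1) * T"
      using assms(3) by (simp_all add: field_simps)
    then have "s \<in> {0..T}" using s_def by (simp add: algebra_simps)
    moreover have "g t = g (s + real_of_int k * T)" by (simp add: s_def)
    ultimately show ?thesis using M periodic_add_of_int[OF assms(2)] by auto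
  qed
  then show ?thesis using that by blast
qed

lemma periodic_vector_derivative:
  assumes "\<And>t. (g has_vector_derivative g' t) (at t)" and "\<forall>t. g (t + T) = g t"
  shows "\<forall>t. g' (t + T) = g' t"
proof
  fix t
  have "((\<lambda>s. s + T) has_vector_derivative 1) (at t)"
    using has_vector_derivative_add[OF has_vector_derivative_id has_vector_derivative_const] by simp
  then have "((g \<circ> (\<lambda>s. s + T)) has_vector_derivative (1 *\<^sub>R g' (t + T))) (at t)"
    using vector_diff_chain_at assms(1) by blast
  moreover have "g \<circ> (\<lambda>s. s + T) = g" using assms(2) by (simp add: fun_eq_iff)
  ultimately have "(g has_vector_derivative g' (t + T)) (at t)" by simp
  then show "g' (t + T) = g' t" using assms(1) vector_derivative_unique_at by blast
qed

lemma local_max_imp_second_derivative_nonpos: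
  fixes g g' :: "real \<Rightarrow> real"
  assumes "0 < \<epsilon>"
    and max: "\<And>s. \<bar>s\<bar> < \<epsilon> \<Longrightarrow> g s \<le> g 0"
    and g': "\<And>s. \<bar>s\<bar> < \<epsilon> \<Longrightarrow> (g has_real_derivative g' s) (at s)"
    and g'': "(g' has_real_derivative k) (at 0)"
  shows "k \<le> 0"
proof (rule ccontr)
  assume "\<not> k \<le> 0"
  have "g' 0 = 0"
    using DERIV_local_max[OF g'[of 0] \<open>0 < \<epsilon>\<close>] max \<open>0 < \<epsilon>\<close> by (simp add: abs_minus_commute)
  obtain d where "d > 0" and inc: "\<And>t. t > 0 \<Longrightarrow> t < d \<Longrightarrow> g' 0 < g' (0 + t)"
    using DERIV_pos_inc_right[OF g''] \<open>\<not> k \<le> 0\<close> by auto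
  define s where "s = min d \<epsilon> / 2"
  have s: "0 < s" "s < d" "s < \<epsilon>" using \<open>d > 0\<close> \<open>0 < \<epsilon>\<close> s_def by auto
  obtain z where "0 < z" "z < s" and mvt: "g s - g 0 = (s - 0) * g' z"
    using MVT2[OF s(1), of g g'] g' s by (metis abs_of_nonneg le_less_trans)
  then have "g' z > 0" using inc[of z] s \<open>g' 0 = 0\<close> by simp
  then have "g s - g 0 > 0" using mvt s by simp
  then show False using max[of s] s by simp
qed

lemma has_real_derivative_inner:
  fixes X Y :: "real \<Rightarrow> 'a::real_inner"
  assumes "(X has_vector_derivative X') (at s)" "(Y has_vector_derivative Y') (at s)"
  shows "((\<lambda>s. X s \<bullet> Y s) has_real_derivative X s \<bullet> Y' + X' \<bullet> Y s) (at s)"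
proof -
  have "((\<lambda>s. X s \<bullet> Y s) has_derivative (\<lambda>h. X s \<bullet> (h *\<^sub>R Y') + (h *\<^sub>R X') \<bullet> Y s)) (at s)"
    using has_derivative_inner assms unfolding has_vector_derivative_def by blast
  moreover have "(\<lambda>h. X s \<bullet> (h *\<^sub>R Y') + (h *\<^sub>R X') \<bullet> Y s) = (*) (X s \<bullet> Y' + X' \<bullet> Y s)"
    by (simp add: fun_eq_iff algebra_simps)
  ultimately show ?thesis by (simp add: has_field_derivative_def)
qed

lemma abs_inner_le_norm_bound:
  fixes x y :: "'a::real_inner"
  assumes "norm y \<le> M"
  shows "\<bar>x \<bullet> y\<bar> \<le> norm x * M"
  using Cauchy_Schwarz_ineq2[of x y] assms by (meson mult_left_mono norm_ge_zero order_trans)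

lemma curvature_bound_function_no_touching:
  fixes v :: "'a::euclidean_space \<Rightarrow> 'a" and y :: "real \<Rightarrow> 'a"
  assumes cb: "curvature_bound_function v W e"
    and "0 < \<epsilon>"
    and y': "\<And>s. \<bar>s\<bar> < \<epsilon> \<Longrightarrow> (y has_vector_derivative v (y s)) (at s)"
    and yW: "\<And>s. \<bar>s\<bar> < \<epsilon> \<Longrightarrow> y s \<in> W"
    and below: "\<And>s. \<bar>s\<bar> < \<epsilon> \<Longrightarrow> e (y s) \<le> 0"
    and "e (y 0) = 0"
    and v': "(v has_derivative Dv) (at (y 0))"
  shows False
proof -
  obtain De D2e where
    e': "\<forall>z\<in>W. (e has_derivative blinfun_apply (De z)) (at z)" and
    e'': "\<forall>z\<in>W. (De has_derivative blinfun_apply (D2e z)) (at z)" and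
    curv: "\<forall>z\<in>W. e z = 0 \<longrightarrow> blinfun_apply (De z) (v z) = 0 \<longrightarrow>
          (\<forall>Dv. (v has_derivative Dv) (at z) \<longrightarrow>
             blinfun_apply (blinfun_apply (D2e z) (v z)) (v z) + blinfun_apply (De z) (Dv (v z)) > 0)"
    using cb unfolding curvature_bound_function_def by blast
  define g' where "g' s = blinfun_apply (De (y s)) (v (y s))" for s
  have y'_at: "(y has_derivative (\<lambda>t. t *\<^sub>R v (y s))) (at s)" if "\<bar>s\<bar> < \<epsilon>" for s
    using y'[OF that] by (simp add: has_vector_derivative_def)
  have g': "((\<lambda>s. e (y s)) has_real_derivative g' s) (at s)" if "\<bar>s\<bar> < \<epsilon>" for s
  proof -
    have "((\<lambda>s. e (y s)) has_derivative (\<lambda>t. blinfun_apply (De (y s)) (t *\<^sub>R v (y s)))) (at s)"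
      using has_derivative_compose[OF y'_at[OF that] e'[rule_format, OF yW[OF that]]] .
    moreover have "(\<lambda>t. blinfun_apply (De (y s)) (t *\<^sub>R v (y s))) = (*) (g' s)"
      by (simp add: fun_eq_iff g'_def blinfun.scaleR_right)
    ultimately show ?thesis by (simp add: has_field_derivative_def)
  qed
  have y0W: "y 0 \<in> W" and y0': "(y has_derivative (\<lambda>t. t *\<^sub>R v (y 0))) (at 0)"
    using yW y'_at \<open>0 < \<epsilon>\<close> by simp_all
  have "g' 0 = 0"
    using DERIV_local_max[OF g'[of 0] \<open>0 < \<epsilon>\<close>] below \<open>e (y 0) = 0\<close> \<open>0 < \<epsilon>\<close> by simp
  define k where "k = blinfun_apply (blinfun_apply (D2e (y 0)) (v (y 0))) (v (y 0))
                      + blinfun_apply (De (y 0)) (Dv (v (y 0)))"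
  have "k > 0" using curv y0W \<open>e (y 0) = 0\<close> \<open>g' 0 = 0\<close> v' unfolding k_def g'_def by blast
  have "(g' has_derivative (\<lambda>t. blinfun_apply (De (y 0)) (Dv (t *\<^sub>R v (y 0)))
           + blinfun_apply (blinfun_apply (D2e (y 0)) (t *\<^sub>R v (y 0))) (v (y 0)))) (at 0)"
    unfolding g'_def
    using bounded_bilinear.FDERIV[OF bounded_bilinear_blinfun_apply
        has_derivative_compose[OF y0' e''[rule_format, OF y0W]] has_derivative_compose[OF y0' v']] .
  moreover have "(\<lambda>t. blinfun_apply (De (y 0)) (Dv (t *\<^sub>R v (y 0)))
           + blinfun_apply (blinfun_apply (D2e (y 0)) (t *\<^sub>R v (y 0))) (v (y 0))) = (*) k"
    using linear_scale[OF has_derivative_linear[OF v']]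
    by (simp add: fun_eq_iff k_def blinfun.scaleR_right blinfun.scaleR_left algebra_simps)
  ultimately have "(g' has_real_derivative k) (at 0)" by (simp add: has_field_derivative_def)
  then have "k \<le> 0"
    using local_max_imp_second_derivative_nonpos[OF \<open>0 < \<epsilon>\<close> _ g'] below \<open>e (y 0) = 0\<close> by simp
  then show False using \<open>k > 0\<close> by simp
qed

definition vfield_accel ::
  "real \<Rightarrow> (real \<Rightarrow> real^2) \<Rightarrow> real \<Rightarrow> real \<Rightarrow> real^2 \<Rightarrow> real^2 \<Rightarrow> real^2" where
  "vfield_accel G F lam t x p =
     (G * sqrt (1 - (norm x)\<^sup>2) - (x \<bullet> p)\<^sup>2 / (1 - (norm x)\<^sup>2) - (norm p)\<^sup>2) *\<^sub>R x
      + lam *\<^sub>R ((x \<bullet> F t) *\<^sub>R x - F t)"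

lemma vfield_eq_accel:
  "vfield G F lam = (\<lambda>(t, x, p). (1, p, vfield_accel G F lam t x p))"
  by (auto simp: vfield_def vfield_accel_def fun_eq_iff split: prod.splits)

lemma inner_vfield_accel:
  "p \<bullet> vfield_accel G F lam t x p' =
     (G * sqrt (1 - x \<bullet> x) - (x \<bullet> p')\<^sup>2 / (1 - x \<bullet> x) - p' \<bullet> p') * (p \<bullet> x)
     + lam * ((x \<bullet> F t) * (p \<bullet> x) - p \<bullet> F t)"
  by (simp add: vfield_accel_def inner_add_right inner_diff_right power2_norm_eq_inner algebra_simps)

lemma vfield_differentiable:
  assumes "norm x < 1" and F': "\<And>t. (F has_vector_derivative F' t) (at t)"
  shows "vfield G F lam differentiable (at (t, x, p))"
proof -
  let ?z = "(t, x, p)"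
  have F_comp: "((\<lambda>z::state. F (fst z)) has_derivative (\<lambda>h. fst h *\<^sub>R F' (fst ?z))) (at ?z)"
    using has_derivative_compose[OF has_derivative_fst[OF has_derivative_ident]
        F'[of "fst ?z", unfolded has_vector_derivative_def]]
    by simp
  have "0 < 1 - x \<bullet> x"
    using assms(1) by (simp add: power2_norm_eq_inner[symmetric] power_less_one_iff abs_less_iff)
  moreover have "vfield G F lam = (\<lambda>z. (1, snd (snd z),
      (G * sqrt (1 - fst (snd z) \<bullet> fst (snd z))
        - (fst (snd z) \<bullet> snd (snd z))\<^sup>2 / (1 - fst (snd z) \<bullet> fst (snd z))
        - snd (snd z) \<bullet> snd (snd z)) *\<^sub>R fst (snd z)
      + lam *\<^sub>R ((fst (snd z) \<bullet> F (fst z)) *\<^sub>R fst (snd z) - F (fst z))))"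
    unfolding vfield_eq_accel vfield_accel_def by (simp add: power2_norm_eq_inner fun_eq_iff split: prod.splits)
  ultimately show ?thesis
    unfolding differentiable_def by (simp only:) (rule exI, (rule derivative_intros F_comp | simp)+)
qed

lemma vfield_trajectory_components:
  assumes "(y has_vector_derivative vfield G F lam (y s)) (at s)"
  shows "((\<lambda>s. fst (y s)) has_real_derivative 1) (at s)"
    and "((\<lambda>s. fst (snd (y s))) has_vector_derivative snd (snd (y s))) (at s)"
    and "((\<lambda>s. snd (snd (y s))) has_vector_derivative
           vfield_accel G F lam (fst (y s)) (fst (snd (y s))) (snd (snd (y s)))) (at s)"
proof -
  have y': "(y has_derivative (\<lambda>h. h *\<^sub>R
      (1, snd (snd (y s)), vfield_accel G F lam (fst (y s)) (fst (snd (y s))) (snd (snd (y s)))))) (at s)"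
    using assms by (simp add: has_vector_derivative_def vfield_eq_accel case_prod_beta)
  have "((*) 1 :: real \<Rightarrow> real) = (\<lambda>h. h)" by (simp add: fun_eq_iff)
  then show "((\<lambda>s. fst (y s)) has_real_derivative 1) (at s)"
    using has_derivative_fst[OF y'] by (simp add: has_field_derivative_def)
  show "((\<lambda>s. fst (snd (y s))) has_vector_derivative snd (snd (y s))) (at s)"
    using has_derivative_fst[OF has_derivative_snd[OF y']] by (simp add: has_vector_derivative_def)
  show "((\<lambda>s. snd (snd (y s))) has_vector_derivative
           vfield_accel G F lam (fst (y s)) (fst (snd (y s))) (snd (snd (y s)))) (at s)"
    using has_derivative_snd[OF has_derivative_snd[OF y']] by (simp add: has_vector_derivative_def)
qed

lemma no_Delta_tangency_at_origin:
  fixes X P F :: "real \<Rightarrow> real^2"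
  assumes "0 < \<epsilon>"
    and X': "(X has_vector_derivative P 0) (at 0)"
    and P': "(P has_vector_derivative vfield_accel G F lam t (X 0) (P 0)) (at 0)"
    and "X 0 = 0" and P0: "norm (P 0) = b" and "0 < b"
    and in_Delta: "\<And>s. \<bar>s\<bar> < \<epsilon> \<Longrightarrow> b * norm (X s) + norm (P s) \<le> b"
    and F_bound: "norm (F t) \<le> M" and "M < b\<^sup>2" and "0 \<le> lam" "lam \<le> 1"
  shows False
proof -
  define c where "c = P 0"
  define lin where "lin s = X s \<bullet> c + (P s \<bullet> c) / b - b" for s
  have accel: "vfield_accel G F lam t (X 0) (P 0) = - (lam *\<^sub>R F t)"
    using \<open>X 0 = 0\<close> by (simp add: vfield_accel_def)
  have cc: "c \<bullet> c = b\<^sup>2" using P0 by (simp add: c_def power2_norm_eq_inner[symmetric])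
  have "((\<lambda>s. X s \<bullet> c) has_real_derivative b\<^sup>2) (at 0)"
    using has_real_derivative_inner[OF X' has_vector_derivative_const[of c]] cc by (simp add: c_def)
  moreover have "((\<lambda>s. P s \<bullet> c) has_real_derivative - (lam * (F t \<bullet> c))) (at 0)"
    using has_real_derivative_inner[OF P' has_vector_derivative_const[of c]] by (simp add: accel)
  ultimately have lin': "(lin has_real_derivative b\<^sup>2 + - (lam * (F t \<bullet> c)) / b - 0) (at 0)"
    unfolding lin_def by (intro DERIV_diff DERIV_add DERIV_cdivide DERIV_const)
  \<comment> \<open>\<open>lin\<close> is a linear minorant of the gauge \<open>b |x| + |p| - b\<close> touching it at \<open>s = 0\<close>.\<close>
  have "lin s \<le> lin 0" if "\<bar>0 - s\<bar> < \<epsilon>" for s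
  proof -
    have "X s \<bullet> c \<le> b * norm (X s)"
      using norm_cauchy_schwarz[of "X s" c] P0 by (simp add: c_def mult.commute)
    moreover have "P s \<bullet> c \<le> norm (P s) * b"
      using norm_cauchy_schwarz[of "P s" c] P0 by (simp add: c_def)
    then have "(P s \<bullet> c) / b \<le> norm (P s)" using \<open>0 < b\<close> by (simp add: divide_le_eq)
    moreover have "lin 0 = 0"
      using \<open>X 0 = 0\<close> cc \<open>0 < b\<close> by (simp add: lin_def c_def power2_eq_square)
    ultimately show ?thesis using in_Delta[of s] that by (simp add: lin_def)
  qed
  then have "b\<^sup>2 + - (lam * (F t \<bullet> c)) / b - 0 = 0"
    using DERIV_local_max[OF lin' \<open>0 < \<epsilon>\<close>] by blast
  moreover have "lam * (F t \<bullet> c) / b \<le> M"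
  proof -
    have "\<bar>F t \<bullet> c\<bar> \<le> b * M"
      using abs_inner_le_norm_bound[OF F_bound, of c] P0 by (simp add: c_def inner_commute)
    moreover have "lam * (F t \<bullet> c) \<le> lam * \<bar>F t \<bullet> c\<bar>"
      using \<open>0 \<le> lam\<close> by (intro mult_left_mono) auto
    moreover have "lam * \<bar>F t \<bullet> c\<bar> \<le> \<bar>F t \<bullet> c\<bar>"
      using \<open>0 \<le> lam\<close> \<open>lam \<le> 1\<close> by (intro mult_left_le_one_le) auto
    ultimately show ?thesis using \<open>0 < b\<close> by (simp add: divide_le_eq mult.commute)
  qed
  ultimately show False using \<open>M < b\<^sup>2\<close> by (simp only: minus_divide_left)
qed

text \<open>The thresholds on \<open>b\<close> needed in the second-derivative estimate below;
  \<open>deriv_error_bound\<close> is the \<open>b\<close>-independent part of the bound on the lower-order terms of \<open>dP\<close>.\<close>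
definition deriv_error_bound :: "real \<Rightarrow> real \<Rightarrow> real \<Rightarrow> real \<Rightarrow> real" where
  "deriv_error_bound a G M M1 =
     16*G*M\<^sup>2/(1-a\<^sup>2) + 32*M\<^sup>2*(1+G+M)/(1-a\<^sup>2) + 512*M^4/(1-a\<^sup>2)\<^sup>2
     + 4*M\<^sup>2 + 4*M*M1 + (G + 16*M\<^sup>2/(1-a\<^sup>2))*M + M\<^sup>2"

definition large_b :: "real \<Rightarrow> real \<Rightarrow> real \<Rightarrow> real \<Rightarrow> real \<Rightarrow> bool" where
  "large_b a G M M1 b \<longleftrightarrow> 1 \<le> b \<and> M < b\<^sup>2 \<and> 4 * M \<le> b\<^sup>2 * (1 - a)
     \<and> 16*M\<^sup>2/(1-a\<^sup>2) + M \<le> b\<^sup>2 * (1-a)\<^sup>2 * (1-a\<^sup>2) / 2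
     \<and> 16*M\<^sup>2 + (16*M\<^sup>2 + deriv_error_bound a G M M1 + M + M1)/(1-a) < b\<^sup>2 * (1-a)\<^sup>2 * (1-a\<^sup>2) / 8"

text \<open>The data of a trajectory at a point where it touches \<open>b |x| + |p| = b\<close> with \<open>x \<noteq> 0\<close>:
  \<open>r = |x|\<close>, \<open>q = |p|\<close>, \<open>B = x \<bullet> p\<close>, \<open>ph = x \<bullet> F\<close>, \<open>ps = p \<bullet> F\<close>, \<open>ch = x \<bullet> F'\<close>,
  \<open>et = p \<bullet> F'\<close>, \<open>Ph = |F|\<^sup>2\<close>; \<open>N\<close> is the scalar coefficient of \<open>x\<close> in the acceleration,
  \<open>P = p \<bullet> p'\<close>, and \<open>dB, dN, dP\<close> are the derivatives of \<open>B, N, P\<close>.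
  The assumption \<open>critical\<close> says that the derivative of the gauge vanishes.\<close>
locale Delta_touching =
  fixes a b G M M1 lam r q B ph ps ch et Ph N P dB dN dP :: real
  assumes b_large: "large_b a G M M1 b"
    and a_lt_1: "a < 1" and G_pos: "0 < G" and M_nonneg: "0 \<le> M" and M1_nonneg: "0 \<le> M1"
    and lam_nonneg: "0 \<le> lam" and lam_le_1: "lam \<le> 1"
    and r_pos: "0 < r" and r_le_a: "r \<le> a" and q_eq: "q = b * (1 - r)"
    and B_bound: "\<bar>B\<bar> \<le> r * q" and ph_bound: "\<bar>ph\<bar> \<le> r * M" and ps_bound: "\<bar>ps\<bar> \<le> q * M"
    and Ph_nonneg: "0 \<le> Ph" and Ph_bound: "Ph \<le> M\<^sup>2"
    and ch_bound: "\<bar>ch\<bar> \<le> r * M1" and et_bound: "\<bar>et\<bar> \<le> q * M1"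
    and N_eq: "N = G * sqrt (1 - r\<^sup>2) - B\<^sup>2 / (1 - r\<^sup>2) - q\<^sup>2"
    and P_eq: "P = N * B + lam * (ph * B - ps)"
    and dB_eq: "dB = q\<^sup>2 + N * r\<^sup>2 + lam * ph * (r\<^sup>2 - 1)"
    and dN_eq: "dN = - G * B / sqrt (1 - r\<^sup>2) - (2 * B * dB * (1 - r\<^sup>2) + 2 * B ^ 3) / (1 - r\<^sup>2)\<^sup>2 - 2 * P"
    and dP_eq: "dP = dN * B + N * dB
                     + lam * ((ps + ch) * B + ph * dB - (N * ph + lam * (ph\<^sup>2 - Ph) + et))"
    and critical: "b * B / r + P / q = 0"
begin

definition d0 :: real where "d0 = 1 - a\<^sup>2"

abbreviation E2 :: real where "E2 \<equiv> deriv_error_bound a G M M1"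

lemma E2_eq:
  "E2 = 16*G*M\<^sup>2/d0 + 32*M\<^sup>2*(1+G+M)/d0 + 512*M^4/d0\<^sup>2 + 4*M\<^sup>2 + 4*M*M1 + (G + 16*M\<^sup>2/d0)*M + M\<^sup>2"
  by (simp add: deriv_error_bound_def d0_def)

definition D :: real where "D = 1 - r\<^sup>2"

definition H :: real where "H = b / r + (N + lam * ph) / q"

definition beta :: real where "beta = 4 * M / b"

lemma b_conditions:
  shows b_ge_1: "1 \<le> b" and b_large_M: "4 * M \<le> b\<^sup>2 * (1 - a)"
    and b_large_dB: "16*M\<^sup>2/d0 + M \<le> b\<^sup>2 * (1-a)\<^sup>2 * d0 / 2"
    and b_large_total: "16*M\<^sup>2 + (16*M\<^sup>2 + E2 + M + M1)/(1-a) < b\<^sup>2 * (1-a)\<^sup>2 * d0 / 8"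
  using b_large by (simp_all add: large_b_def d0_def)

lemma r_lt_1: "r < 1"
  using r_le_a a_lt_1 by linarith

lemma d0_pos: "0 < d0"
proof -
  have "0 < a" using r_pos r_le_a by linarith
  then have "a\<^sup>2 < 1" using a_lt_1 by (simp add: power_less_one_iff abs_less_iff)
  then show ?thesis by (simp add: d0_def)
qed

lemma D_bounds:
  shows d0_le_D: "d0 \<le> D" and D_pos: "0 < D" and D_le_1: "D \<le> 1" and d0_le_sqrt_D: "d0 \<le> sqrt D"
proof -
  show "d0 \<le> D" using r_le_a r_pos by (simp add: D_def d0_def power_mono)
  then show D0: "0 < D" using d0_pos by linarith
  show "D \<le> 1" by (simp add: D_def)
  then have "sqrt D * sqrt D \<le> sqrt D * 1" using D0 by (intro mult_left_mono) auto
  then have "D \<le> sqrt D" using D0 by simp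
  then show "d0 \<le> sqrt D" using \<open>d0 \<le> D\<close> by linarith
qed

lemma q_bounds:
  shows q_pos: "0 < q" and q_lower: "b * (1 - a) \<le> q" and q_le_b: "q \<le> b"
  using q_eq b_ge_1 r_lt_1 r_le_a r_pos by simp_all

lemma N_eq_D: "N = G * sqrt D - B\<^sup>2 / D - q\<^sup>2"
  using N_eq by (simp add: D_def)

lemma abs_lam_ph: "\<bar>lam * ph\<bar> \<le> r * M"
proof -
  have "\<bar>lam * ph\<bar> = lam * \<bar>ph\<bar>" using lam_nonneg by (simp add: abs_mult)
  also have "\<dots> \<le> 1 * \<bar>ph\<bar>" using lam_le_1 by (intro mult_right_mono) auto
  finally show ?thesis using ph_bound by simp
qed

lemma N_lower: "- q\<^sup>2 / D \<le> N"
proof -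
  have "\<bar>B\<bar>\<^sup>2 \<le> (r * q)\<^sup>2" using B_bound by (intro power_mono) auto
  then have "B\<^sup>2 / D \<le> r\<^sup>2 * q\<^sup>2 / D"
    using D_pos by (intro divide_right_mono) (auto simp: power_mult_distrib)
  moreover have "r\<^sup>2 * q\<^sup>2 / D + q\<^sup>2 = q\<^sup>2 * (r\<^sup>2 + D) / D" using D_pos by (simp add: field_simps)
  moreover have "r\<^sup>2 + D = 1" by (simp add: D_def)
  moreover have "0 \<le> G * sqrt D" using G_pos D_pos by simp
  ultimately show ?thesis using N_eq_D by simp
qed

text \<open>Since \<open>q/D = b/(1+r)\<close>, the negative part of \<open>N/q\<close> eats at most half of \<open>b/r\<close>.\<close>
lemma H_lower: "b / (4 * r) \<le> H"
proof -
  have qD: "q / D = b / (1 + r)"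
  proof -
    have "D = (1 - r) * (1 + r)" by (simp add: D_def power2_eq_square algebra_simps)
    then show ?thesis using q_eq r_pos r_lt_1 by simp
  qed
  have "(- q\<^sup>2 / D - r * M) / q \<le> (N + lam * ph) / q"
    using N_lower abs_lam_ph q_pos by (intro divide_right_mono) auto
  moreover have "(- q\<^sup>2 / D - r * M) / q = - (q / D) - r * M / q"
    using q_pos D_pos by (simp add: field_simps power2_eq_square)
  ultimately have H1: "b / r - b / (1 + r) - r * M / q \<le> H" unfolding H_def using qD by linarith
  have "b / r - b / (1 + r) = b / (r * (1 + r))" using r_pos by (simp add: field_simps)
  moreover have "b / (2 * r) \<le> b / (r * (1 + r))" using r_pos r_lt_1 b_ge_1
    by (intro divide_left_mono) (auto simp: algebra_simps intro!: mult_pos_pos add_pos_pos)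
  ultimately have H2: "b / (2 * r) \<le> b / r - b / (1 + r)" by simp
  have "r * M / q \<le> 1 * M / (b * (1 - a))"
    using r_lt_1 r_pos M_nonneg q_lower b_ge_1 a_lt_1 by (intro frac_le mult_right_mono) auto
  also have "\<dots> \<le> b / 4" using b_large_M b_ge_1 a_lt_1 by (simp add: field_simps power2_eq_square)
  also have "\<dots> \<le> b / (4 * r)" using r_pos r_lt_1 b_ge_1 by (intro divide_left_mono) auto
  finally have H3: "r * M / q \<le> b / (4 * r)" .
  have "b / (2 * r) = b / (4 * r) + b / (4 * r)" by (simp add: field_simps)
  then show ?thesis using H1 H2 H3 by linarith
qed

lemma H_pos: "0 < H"
  using H_lower b_ge_1 r_pos by (smt (verit) divide_pos_pos)

text \<open>The critical-point equation reads \<open>B H = lam ps / q\<close>; as \<open>H\<close> is of order \<open>b/r\<close>,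
  this makes \<open>B\<close> of order \<open>r/b\<close>.\<close>
lemma abs_B_le_beta: "\<bar>B\<bar> \<le> r * beta"
proof -
  have "b * B / r + (N * B + lam * (ph * B - ps)) / q = 0" using critical P_eq by simp
  then have "B * H = lam * ps / q" unfolding H_def using r_pos q_pos by (simp add: field_simps)
  then have "\<bar>B\<bar> * H = \<bar>lam * ps / q\<bar>" using H_pos by (metis abs_mult abs_of_pos)
  also have "\<dots> = lam * \<bar>ps\<bar> / q" using lam_nonneg q_pos by (simp add: abs_mult)
  also have "\<dots> \<le> 1 * (q * M) / q"
    using lam_nonneg lam_le_1 ps_bound q_pos by (intro divide_right_mono mult_mono) auto
  also have "\<dots> = M" using q_pos by simp
  finally have "\<bar>B\<bar> * H \<le> M" .
  moreover have "\<bar>B\<bar> * (b / (4 * r)) \<le> \<bar>B\<bar> * H" using H_lower by (intro mult_left_mono) auto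
  ultimately have "\<bar>B\<bar> * (b / (4 * r)) \<le> M" by linarith
  then show ?thesis unfolding beta_def using r_pos b_ge_1 by (simp add: field_simps)
qed

lemma beta_bounds:
  shows beta_nonneg: "0 \<le> beta" and beta_mult_b: "beta * b = 4 * M" and beta_le: "beta \<le> 4 * M"
    and b_sq_beta_sq: "b\<^sup>2 * beta\<^sup>2 = 16 * M\<^sup>2" and beta_sq_le: "beta\<^sup>2 \<le> 16 * M\<^sup>2"
proof -
  show "0 \<le> beta" "beta * b = 4 * M" using M_nonneg b_ge_1 by (simp_all add: beta_def)
  have "4 * M / b \<le> 4 * M / 1" using b_ge_1 M_nonneg by (intro divide_left_mono) auto
  then show "beta \<le> 4 * M" by (simp add: beta_def)
  have "b\<^sup>2 * beta\<^sup>2 = (beta * b)\<^sup>2" by (simp add: power_mult_distrib)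
  then show "b\<^sup>2 * beta\<^sup>2 = 16 * M\<^sup>2" using \<open>beta * b = 4 * M\<close> by (simp add: power_mult_distrib)
  have "beta\<^sup>2 \<le> (4 * M)\<^sup>2" using \<open>beta \<le> 4 * M\<close> \<open>0 \<le> beta\<close> by (intro power_mono) auto
  then show "beta\<^sup>2 \<le> 16 * M\<^sup>2" by (simp add: power_mult_distrib)
qed

lemma B_sq_bounds:
  shows B_sq_le_r_beta: "B\<^sup>2 \<le> r\<^sup>2 * beta\<^sup>2" and abs_B_le: "\<bar>B\<bar> \<le> beta"
    and B_sq_le_beta: "B\<^sup>2 \<le> beta\<^sup>2" and B_sq_le_M: "B\<^sup>2 \<le> 16 * M\<^sup>2"
proof -
  have "\<bar>B\<bar>\<^sup>2 \<le> (r * beta)\<^sup>2" using abs_B_le_beta by (intro power_mono) auto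
  then show "B\<^sup>2 \<le> r\<^sup>2 * beta\<^sup>2" by (simp add: power_mult_distrib)
  have "r * beta \<le> 1 * beta" using r_lt_1 beta_nonneg by (intro mult_right_mono) auto
  then show B1: "\<bar>B\<bar> \<le> beta" using abs_B_le_beta by linarith
  have "\<bar>B\<bar>\<^sup>2 \<le> beta\<^sup>2" using B1 by (intro power_mono) auto
  then show "B\<^sup>2 \<le> beta\<^sup>2" by simp
  then show "B\<^sup>2 \<le> 16 * M\<^sup>2" using beta_sq_le by linarith
qed

lemma abs_lam_ph_D: "\<bar>lam * ph * D\<bar> \<le> M"
proof -
  have "\<bar>lam * ph * D\<bar> = \<bar>lam * ph\<bar> * D" using D_pos by (simp add: abs_mult)
  also have "\<dots> \<le> (r * M) * 1" using abs_lam_ph D_le_1 D_pos by (intro mult_mono) auto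
  also have "\<dots> \<le> 1 * M" using r_lt_1 r_pos M_nonneg by (simp add: mult_left_le_one_le)
  finally show ?thesis by simp
qed

lemma dB_eq_D: "dB = q\<^sup>2 * D + r\<^sup>2 * G * sqrt D - r\<^sup>2 * B\<^sup>2 / D - lam * ph * D"
proof -
  have r_sq: "r\<^sup>2 = 1 - D" by (simp add: D_def)
  show ?thesis unfolding dB_eq N_eq_D r_sq using D_pos by (simp add: field_simps)
qed

lemma dB_bounds:
  shows dB_lower: "b\<^sup>2 * (1 - a)\<^sup>2 * d0 / 2 \<le> dB" and dB_nonneg: "0 \<le> dB"
    and dB_upper: "dB \<le> b\<^sup>2 + G + M"
proof -
  have r_sq_le_1: "r\<^sup>2 \<le> 1" using r_pos r_lt_1 by (simp add: power_le_one)
  have "r\<^sup>2 * B\<^sup>2 \<le> 1 * (16 * M\<^sup>2)" using r_sq_le_1 B_sq_le_M by (intro mult_mono) auto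
  then have t1: "r\<^sup>2 * B\<^sup>2 / D \<le> 16 * M\<^sup>2 / d0" using d0_pos d0_le_D by (intro frac_le) auto
  have t3: "0 \<le> r\<^sup>2 * G * sqrt D" using G_pos D_pos by simp
  have "(b * (1 - a))\<^sup>2 \<le> q\<^sup>2" using q_lower b_ge_1 a_lt_1 by (intro power_mono) auto
  then have "b\<^sup>2 * (1 - a)\<^sup>2 \<le> q\<^sup>2" by (simp add: power_mult_distrib)
  then have "b\<^sup>2 * (1 - a)\<^sup>2 * d0 \<le> q\<^sup>2 * D" using d0_le_D d0_pos by (intro mult_mono) auto
  then show lower: "b\<^sup>2 * (1 - a)\<^sup>2 * d0 / 2 \<le> dB"
    using dB_eq_D t1 abs_lam_ph_D t3 b_large_dB by linarith
  have "0 \<le> b\<^sup>2 * (1 - a)\<^sup>2 * d0 / 2" using d0_pos by simp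
  then show "0 \<le> dB" using lower by linarith
  have "q\<^sup>2 * D \<le> q\<^sup>2 * 1" using D_le_1 by (intro mult_left_mono) auto
  moreover have "q\<^sup>2 \<le> b\<^sup>2" using q_le_b q_pos by (intro power_mono) auto
  moreover have "r\<^sup>2 * G * sqrt D \<le> 1 * G * 1"
    using r_sq_le_1 D_le_1 G_pos D_pos by (intro mult_mono) auto
  moreover have "0 \<le> r\<^sup>2 * B\<^sup>2 / D" using D_pos by simp
  ultimately show "dB \<le> b\<^sup>2 + G + M" using dB_eq_D abs_lam_ph_D by linarith
qed

definition remainder :: real where
  "remainder = dN * B + lam * ((ps + ch) * B - (N * ph + lam * (ph\<^sup>2 - Ph) + et))"

lemma P_eq_critical: "P = - b * q * B / r"
  using critical q_pos r_pos by (simp add: field_simps)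

lemma second_derivative_eq:
  "b * (dB / r - B * B / r ^ 3) + dP / q - P * P / q ^ 3
     = dB * H + remainder / q - b * B\<^sup>2 / r ^ 3 - b\<^sup>2 * B\<^sup>2 / (r\<^sup>2 * q)"
proof -
  have "dP = remainder + (N + lam * ph) * dB" unfolding dP_eq remainder_def by (simp add: algebra_simps)
  moreover have "P * P / q ^ 3 = b\<^sup>2 * B\<^sup>2 / (r\<^sup>2 * q)" unfolding P_eq_critical using q_pos r_pos
    by (simp add: field_simps power2_eq_square power3_eq_cube)
  ultimately show ?thesis unfolding H_def using q_pos r_pos
    by (simp add: field_simps power2_eq_square power3_eq_cube)
qed

lemma dN_B_lower: "- (16 * G * M\<^sup>2 / d0) - 32 * M\<^sup>2 * (1 + G + M) / d0 - 512 * M ^ 4 / d0\<^sup>2 \<le> dN * B"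
proof -
  have dN_D: "dN = - G * B / sqrt D - (2 * B * dB * D + 2 * B ^ 3) / D\<^sup>2 - 2 * P"
    using dN_eq by (simp add: D_def)
  have dNB: "dN * B = - (G * B\<^sup>2 / sqrt D) - 2 * B\<^sup>2 * dB / D - 2 * (B\<^sup>2)\<^sup>2 / D\<^sup>2 + 2 * b * q * B\<^sup>2 / r"
    unfolding dN_D P_eq_critical using D_pos r_pos by (simp add: field_simps power2_eq_square power3_eq_cube)
  have "G * B\<^sup>2 \<le> G * (16 * M\<^sup>2)" using B_sq_le_M G_pos by (intro mult_left_mono) auto
  then have "G * B\<^sup>2 / sqrt D \<le> G * (16 * M\<^sup>2) / d0"
    using d0_le_sqrt_D d0_pos G_pos by (intro frac_le) auto
  then have e1: "G * B\<^sup>2 / sqrt D \<le> 16 * G * M\<^sup>2 / d0" by (simp add: algebra_simps)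
  have "B\<^sup>2 * dB \<le> beta\<^sup>2 * (b\<^sup>2 + G + M)" using B_sq_le_beta dB_upper dB_nonneg by (intro mult_mono) auto
  also have "\<dots> = b\<^sup>2 * beta\<^sup>2 + beta\<^sup>2 * (G + M)" by (simp add: algebra_simps)
  also have "\<dots> \<le> 16 * M\<^sup>2 + 16 * M\<^sup>2 * (G + M)" using b_sq_beta_sq beta_sq_le G_pos M_nonneg
    by (intro add_mono mult_right_mono) auto
  finally have "2 * (B\<^sup>2 * dB) \<le> 32 * M\<^sup>2 * (1 + G + M)" by (simp add: algebra_simps)
  then have "2 * (B\<^sup>2 * dB) / D \<le> 32 * M\<^sup>2 * (1 + G + M) / d0"
    using d0_le_D d0_pos dB_nonneg G_pos M_nonneg by (intro frac_le) auto
  then have e2: "2 * B\<^sup>2 * dB / D \<le> 32 * M\<^sup>2 * (1 + G + M) / d0" by (simp add: mult.assoc)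
  have "(B\<^sup>2)\<^sup>2 \<le> (16 * M\<^sup>2)\<^sup>2" using B_sq_le_M by (intro power_mono) auto
  then have "2 * (B\<^sup>2)\<^sup>2 \<le> 512 * M ^ 4"
    by (simp add: power_mult_distrib power2_eq_square numeral_eq_Suc mult.assoc)
  moreover have "d0\<^sup>2 \<le> D\<^sup>2" using d0_le_D d0_pos by (intro power_mono) auto
  ultimately have e3: "2 * (B\<^sup>2)\<^sup>2 / D\<^sup>2 \<le> 512 * M ^ 4 / d0\<^sup>2" using d0_pos by (intro frac_le) auto
  have e4: "0 \<le> 2 * b * q * B\<^sup>2 / r" using b_ge_1 q_pos r_pos by simp
  show ?thesis using dNB e1 e2 e3 e4 by linarith
qed

lemma lam_terms_bounds:
  shows "\<bar>lam * ((ps + ch) * B)\<bar> \<le> 4 * M\<^sup>2 + 4 * M * M1"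
    and "\<bar>lam * (N * ph + lam * (ph\<^sup>2 - Ph) + et)\<bar>
           \<le> (G + 16 * M\<^sup>2 / d0) * M + b\<^sup>2 * M + M\<^sup>2 + b * M1"
proof -
  have "q * M \<le> b * M" using q_le_b M_nonneg by (intro mult_right_mono) auto
  moreover have "r * M1 \<le> 1 * M1" using r_lt_1 M1_nonneg by (intro mult_right_mono) auto
  ultimately have "\<bar>ps + ch\<bar> \<le> b * M + M1" using ps_bound ch_bound by linarith
  then have "\<bar>ps + ch\<bar> * \<bar>B\<bar> \<le> (b * M + M1) * beta" using abs_B_le by (intro mult_mono) auto
  also have "\<dots> = M * (beta * b) + M1 * beta" by (simp add: algebra_simps)
  also have "\<dots> \<le> M * (4 * M) + M1 * (4 * M)"
    using beta_mult_b beta_le M1_nonneg M_nonneg by (intro add_mono mult_left_mono) auto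
  finally have "\<bar>ps + ch\<bar> * \<bar>B\<bar> \<le> 4 * M\<^sup>2 + 4 * M * M1" by (simp add: power2_eq_square algebra_simps)
  moreover have "\<bar>lam * ((ps + ch) * B)\<bar> \<le> \<bar>ps + ch\<bar> * \<bar>B\<bar>"
    using lam_nonneg lam_le_1 by (simp add: abs_mult mult_left_le_one_le)
  ultimately show "\<bar>lam * ((ps + ch) * B)\<bar> \<le> 4 * M\<^sup>2 + 4 * M * M1" by linarith
  have "\<bar>G * sqrt D\<bar> \<le> G" using G_pos D_le_1 D_pos by (simp add: abs_mult mult_left_le)
  moreover have "B\<^sup>2 / D \<le> 16 * M\<^sup>2 / d0" using B_sq_le_M d0_le_D d0_pos by (intro frac_le) auto
  moreover have "0 \<le> B\<^sup>2 / D" using D_pos by simp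
  moreover have "q\<^sup>2 \<le> b\<^sup>2" using q_le_b q_pos by (intro power_mono) auto
  ultimately have "\<bar>N\<bar> \<le> G + 16 * M\<^sup>2 / d0 + b\<^sup>2" using N_eq_D by (smt (verit) zero_le_power2)
  moreover have ph_M: "\<bar>ph\<bar> \<le> M" using ph_bound r_lt_1 r_pos M_nonneg by (smt (verit) mult_left_le_one_le)
  ultimately have 1: "\<bar>N * ph\<bar> \<le> (G + 16 * M\<^sup>2 / d0 + b\<^sup>2) * M"
    unfolding abs_mult by (intro mult_mono) auto
  have "ph\<^sup>2 \<le> M\<^sup>2" using ph_M by (metis abs_ge_zero power2_abs power_mono)
  then have 2: "\<bar>lam * (ph\<^sup>2 - Ph)\<bar> \<le> M\<^sup>2" using Ph_nonneg Ph_bound lam_nonneg lam_le_1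
    by (simp add: abs_mult) (smt (verit) mult_left_le_one_le zero_le_power2)
  have 3: "\<bar>et\<bar> \<le> b * M1" using et_bound q_le_b M1_nonneg by (smt (verit) mult_right_mono)
  have "\<bar>N * ph + lam * (ph\<^sup>2 - Ph) + et\<bar> \<le> (G + 16 * M\<^sup>2 / d0 + b\<^sup>2) * M + M\<^sup>2 + b * M1"
    using 1 2 3 by linarith
  moreover have "\<bar>lam * (N * ph + lam * (ph\<^sup>2 - Ph) + et)\<bar> \<le> \<bar>N * ph + lam * (ph\<^sup>2 - Ph) + et\<bar>"
    using lam_nonneg lam_le_1 by (simp add: abs_mult mult_left_le_one_le)
  ultimately show "\<bar>lam * (N * ph + lam * (ph\<^sup>2 - Ph) + et)\<bar>
           \<le> (G + 16 * M\<^sup>2 / d0) * M + b\<^sup>2 * M + M\<^sup>2 + b * M1"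
    by (simp add: algebra_simps)
qed

lemma remainder_lower: "- (E2 + b\<^sup>2 * M + b * M1) \<le> remainder"
proof -
  have "remainder = dN * B + lam * ((ps + ch) * B) - lam * (N * ph + lam * (ph\<^sup>2 - Ph) + et)"
    unfolding remainder_def by (simp add: algebra_simps)
  then have "- (16 * G * M\<^sup>2 / d0) - 32 * M\<^sup>2 * (1 + G + M) / d0 - 512 * M ^ 4 / d0\<^sup>2
      - (4 * M\<^sup>2 + 4 * M * M1) - ((G + 16 * M\<^sup>2 / d0) * M + b\<^sup>2 * M + M\<^sup>2 + b * M1) \<le> remainder"
    using dN_B_lower abs_le_D2[OF lam_terms_bounds(1)] abs_le_D1[OF lam_terms_bounds(2)] by argo
  then show ?thesis unfolding E2_eq by argo
qed

lemma E2_nonneg: "0 \<le> E2"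
  unfolding E2_eq using G_pos M_nonneg M1_nonneg d0_pos by simp

lemma remainder_div_q_lower: "- (b * (E2 + M + M1) / ((1 - a) * r)) \<le> remainder / q"
proof -
  have "(E2 + b\<^sup>2 * M + b * M1) / q \<le> (E2 + b\<^sup>2 * M + b * M1) / (b * (1 - a))"
    using E2_nonneg M_nonneg M1_nonneg q_lower b_ge_1 a_lt_1 q_pos by (intro divide_left_mono) auto
  also have "\<dots> = (E2 / b + b * M + M1) / (1 - a)"
  proof -
    have "(E2 + b\<^sup>2 * M + b * M1) / b = E2 / b + b * M + M1"
      using b_ge_1 by (simp add: add_divide_distrib power2_eq_square)
    then show ?thesis by (metis divide_divide_eq_left mult.commute)
  qed
  also have "\<dots> \<le> (b * (E2 + M + M1)) / (1 - a)"
  proof -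
    have "E2 / b \<le> E2 / 1" using E2_nonneg b_ge_1 by (intro divide_left_mono) auto
    moreover have "E2 \<le> b * E2" "M1 \<le> b * M1"
      using E2_nonneg M1_nonneg b_ge_1 by (simp_all add: mult_le_cancel_right1)
    ultimately have "E2 / b + b * M + M1 \<le> b * (E2 + M + M1)" by (simp add: algebra_simps)
    then show ?thesis using a_lt_1 by (intro divide_right_mono) auto
  qed
  also have "\<dots> \<le> (b * (E2 + M + M1)) / ((1 - a) * r)"
    using r_pos r_lt_1 a_lt_1 E2_nonneg M_nonneg M1_nonneg b_ge_1
    by (intro divide_left_mono) (auto simp: mult_left_le_one_le)
  finally have "(E2 + b\<^sup>2 * M + b * M1) / q \<le> b * (E2 + M + M1) / ((1 - a) * r)" .
  moreover have "- (E2 + b\<^sup>2 * M + b * M1) / q \<le> remainder / q"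
    using remainder_lower q_pos by (intro divide_right_mono) auto
  ultimately show ?thesis by (simp only: minus_divide_left)
qed

lemma dB_H_lower: "b ^ 3 * (1 - a)\<^sup>2 * d0 / (8 * r) \<le> dB * H"
proof -
  have "(b\<^sup>2 * (1 - a)\<^sup>2 * d0 / 2) * (b / (4 * r)) \<le> dB * H"
    using dB_lower H_lower d0_pos b_ge_1 r_pos dB_nonneg by (intro mult_mono) auto
  moreover have "(b\<^sup>2 * (1 - a)\<^sup>2 * d0 / 2) * (b / (4 * r)) = (b\<^sup>2 * b) * (1 - a)\<^sup>2 * d0 / (8 * r)"
    using r_pos by (simp add: field_simps)
  moreover have "b\<^sup>2 * b = b ^ 3" by (simp add: power2_eq_square power3_eq_cube)
  ultimately show ?thesis by metis
qed

lemma B_sq_terms_upper: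
  shows "b * B\<^sup>2 / r ^ 3 \<le> 16 * M\<^sup>2 / r"
    and "b\<^sup>2 * B\<^sup>2 / (r\<^sup>2 * q) \<le> 16 * M\<^sup>2 / ((1 - a) * r)"
proof -
  have "b * B\<^sup>2 / r ^ 3 \<le> b * (r\<^sup>2 * beta\<^sup>2) / r ^ 3" using B_sq_le_r_beta b_ge_1 r_pos
    by (intro divide_right_mono mult_left_mono) auto
  also have "\<dots> = (beta * b) * beta / r" using r_pos by (simp add: field_simps power2_eq_square power3_eq_cube)
  also have "\<dots> = 4 * M * beta / r" using beta_mult_b by simp
  also have "\<dots> \<le> 4 * M * (4 * M) / r" using beta_le M_nonneg r_pos
    by (intro divide_right_mono mult_left_mono) auto
  finally show "b * B\<^sup>2 / r ^ 3 \<le> 16 * M\<^sup>2 / r" by (simp add: power2_eq_square)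
  have "b\<^sup>2 * B\<^sup>2 / (r\<^sup>2 * q) \<le> b\<^sup>2 * (r\<^sup>2 * beta\<^sup>2) / (r\<^sup>2 * q)" using B_sq_le_r_beta r_pos q_pos
    by (intro divide_right_mono mult_left_mono) auto
  also have "\<dots> = 16 * M\<^sup>2 / q" using r_pos b_sq_beta_sq by simp
  also have "\<dots> \<le> 16 * M\<^sup>2 / (b * (1 - a))"
    using q_lower b_ge_1 a_lt_1 M_nonneg q_pos by (intro divide_left_mono) auto
  also have "\<dots> \<le> 16 * M\<^sup>2 / (1 * (1 - a))"
    using b_ge_1 a_lt_1 M_nonneg by (intro divide_left_mono mult_right_mono) auto
  also have "\<dots> \<le> 16 * M\<^sup>2 / ((1 - a) * r)" using r_pos r_lt_1 a_lt_1 M_nonneg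
    by (intro divide_left_mono) (auto simp: mult_left_le_one_le)
  finally show "b\<^sup>2 * B\<^sup>2 / (r\<^sup>2 * q) \<le> 16 * M\<^sup>2 / ((1 - a) * r)" .
qed

lemma second_derivative_pos: "0 < b * (dB / r - B * B / r ^ 3) + dP / q - P * P / q ^ 3"
proof -
  define Z where "Z = b^3 * (1 - a)\<^sup>2 * d0 / 8 - 16 * M\<^sup>2 - 16 * M\<^sup>2 / (1 - a) - b * (E2 + M + M1) / (1 - a)"
  have "Z / r = b^3 * (1 - a)\<^sup>2 * d0 / (8 * r) - 16 * M\<^sup>2 / r - 16 * M\<^sup>2 / ((1 - a) * r)
                 - b * (E2 + M + M1) / ((1 - a) * r)"
    unfolding Z_def diff_divide_distrib divide_divide_eq_left by (simp add: mult.commute)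
  then have "Z / r \<le> b * (dB / r - B * B / r ^ 3) + dP / q - P * P / q ^ 3"
    unfolding second_derivative_eq using dB_H_lower B_sq_terms_upper remainder_div_q_lower by linarith
  moreover have "0 < Z"
  proof -
    have "b * (16*M\<^sup>2 + (16*M\<^sup>2 + E2 + M + M1)/(1-a)) < b * (b\<^sup>2 * (1 - a)\<^sup>2 * d0 / 8)"
      using b_large_total b_ge_1 by simp
    also have "\<dots> = b^3 * (1 - a)\<^sup>2 * d0 / 8" by (simp add: power2_eq_square power3_eq_cube)
    finally have 1: "b * (16*M\<^sup>2 + (16*M\<^sup>2 + E2 + M + M1)/(1-a)) < b^3 * (1 - a)\<^sup>2 * d0 / 8" .
    have "16 * M\<^sup>2 \<le> b * (16 * M\<^sup>2)" using b_ge_1 M_nonneg by (simp add: mult_le_cancel_right1)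
    moreover have "16 * M\<^sup>2 / (1 - a) \<le> b * (16 * M\<^sup>2 / (1 - a))"
    proof -
      have "0 \<le> 16 * M\<^sup>2 / (1 - a)" using a_lt_1 by simp
      from mult_right_mono[OF b_ge_1 this] show ?thesis by simp
    qed
    moreover have "b * (16*M\<^sup>2 + (16*M\<^sup>2 + E2 + M + M1)/(1-a))
        = b * (16 * M\<^sup>2) + b * (16 * M\<^sup>2 / (1 - a)) + b * (E2 + M + M1) / (1 - a)"
      unfolding add_divide_distrib distrib_left by simp
    ultimately show ?thesis using 1 unfolding Z_def by linarith
  qed
  ultimately show ?thesis using r_pos by (smt (verit) divide_pos_pos)
qed

end

lemma has_real_derivative_norm_curve:
  fixes X :: "real \<Rightarrow> 'a::real_inner"
  assumes X': "(X has_vector_derivative X') (at s)" and "X s \<noteq> 0"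
  shows "((\<lambda>s. norm (X s)) has_real_derivative (X s \<bullet> X') / norm (X s)) (at s)"
proof -
  have sq': "((\<lambda>s. X s \<bullet> X s) has_real_derivative 2 * (X s \<bullet> X')) (at s)"
    using has_real_derivative_inner[OF X' X'] by (simp add: inner_commute)
  have "0 < X s \<bullet> X s" using \<open>X s \<noteq> 0\<close> by simp
  from DERIV_chain2[OF DERIV_real_sqrt[OF this] sq']
  have "((\<lambda>s. sqrt (X s \<bullet> X s)) has_real_derivative
                     inverse (sqrt (X s \<bullet> X s)) / 2 * (2 * (X s \<bullet> X'))) (at s)" .
  then show ?thesis
    unfolding norm_eq_sqrt_inner[symmetric] by (rule DERIV_cong) (simp add: field_simps)
qed

lemma inner_F_vfield_accel:
  "vfield_accel G F lam t x p \<bullet> F t =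
     (G * sqrt (1 - x \<bullet> x) - (x \<bullet> p)\<^sup>2 / (1 - x \<bullet> x) - p \<bullet> p) * (x \<bullet> F t)
     + lam * ((x \<bullet> F t)\<^sup>2 - F t \<bullet> F t)"
proof -
  have "norm y * norm y = y \<bullet> y" for y :: "real^2"
    by (simp add: power2_norm_eq_inner[symmetric] power2_eq_square)
  then show ?thesis
    by (simp add: vfield_accel_def inner_add_left inner_diff_left power2_norm_eq_inner
        power2_eq_square algebra_simps)
qed

lemma accel_coefficient_has_real_derivative:
  fixes A B C :: "real \<Rightarrow> real"
  assumes A': "(A has_real_derivative 2 * B 0) (at 0)" and B': "(B has_real_derivative dB) (at 0)"
    and C': "(C has_real_derivative dC) (at 0)" and "A 0 = r\<^sup>2" and "r\<^sup>2 < 1"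
  shows "((\<lambda>s. G * sqrt (1 - A s) - (B s)\<^sup>2 / (1 - A s) - C s) has_real_derivative
           - G * B 0 / sqrt (1 - r\<^sup>2) - (2 * B 0 * dB * (1 - r\<^sup>2) + 2 * B 0 ^ 3) / (1 - r\<^sup>2)\<^sup>2 - dC) (at 0)"
proof -
  have A1': "((\<lambda>s. 1 - A s) has_real_derivative - (2 * B 0)) (at 0)"
    using DERIV_diff[OF DERIV_const A'] by simp
  have "0 < sqrt (1 - r\<^sup>2)" using \<open>r\<^sup>2 < 1\<close> by simp
  then have sqrt': "((\<lambda>s. sqrt (1 - A s)) has_real_derivative - B 0 / sqrt (1 - r\<^sup>2)) (at 0)"
    using DERIV_chain2[OF DERIV_real_sqrt A1'] \<open>A 0 = r\<^sup>2\<close> \<open>r\<^sup>2 < 1\<close> by (simp add: field_simps)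
  have Bsq': "((\<lambda>s. (B s)\<^sup>2) has_real_derivative 2 * B 0 * dB) (at 0)"
    using DERIV_mult[OF B' B'] by (simp add: power2_eq_square algebra_simps)
  have quot': "((\<lambda>s. (B s)\<^sup>2 / (1 - A s)) has_real_derivative
       (2 * B 0 * dB * (1 - r\<^sup>2) + 2 * B 0 ^ 3) / (1 - r\<^sup>2)\<^sup>2) (at 0)"
    using DERIV_divide[OF Bsq' A1'] \<open>A 0 = r\<^sup>2\<close> \<open>r\<^sup>2 < 1\<close>
    by (rule_tac DERIV_cong) (auto simp: field_simps power2_eq_square power3_eq_cube)
  show ?thesis
    using DERIV_diff[OF DERIV_diff[OF DERIV_cmult[OF sqrt', of G] quot'] C']
    by (rule DERIV_cong) (simp add: field_simps)
qed

lemma gauge_derivative_has_real_derivative: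
  fixes A B C ph ps :: "real \<Rightarrow> real" and r q G lam b dB P0 N0 dph dps dN dP :: real
  assumes A': "(A has_real_derivative 2 * B 0) (at 0)"
    and B': "(B has_real_derivative dB) (at 0)"
    and C': "(C has_real_derivative 2 * P0) (at 0)"
    and ph': "(ph has_real_derivative dph) (at 0)"
    and ps': "(ps has_real_derivative dps) (at 0)"
    and A0: "A 0 = r\<^sup>2" and C0: "C 0 = q\<^sup>2" and "0 < r" "0 < q" "r < 1"
    and N0: "N0 = G * sqrt (1 - r\<^sup>2) - (B 0)\<^sup>2 / (1 - r\<^sup>2) - q\<^sup>2"
    and P0: "P0 = N0 * B 0 + lam * (ph 0 * B 0 - ps 0)"
    and dN: "dN = - G * B 0 / sqrt (1 - r\<^sup>2) - (2 * B 0 * dB * (1 - r\<^sup>2) + 2 * B 0 ^ 3) / (1 - r\<^sup>2)\<^sup>2 - 2 * P0"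
    and dP: "dP = dN * B 0 + N0 * dB + lam * (dph * B 0 + ph 0 * dB - dps)"
  shows "((\<lambda>s. b * B s / sqrt (A s) + ((G * sqrt (1 - A s) - (B s)\<^sup>2 / (1 - A s) - C s) * B s
            + lam * (ph s * B s - ps s)) / sqrt (C s))
         has_real_derivative b * (dB / r - B 0 * B 0 / r ^ 3) + dP / q - P0 * P0 / q ^ 3) (at 0)"
proof -
  have "r\<^sup>2 < 1" using \<open>0 < r\<close> \<open>r < 1\<close> by (simp add: power_less_one_iff abs_less_iff)
  have sA: "sqrt (A 0) = r" and sC: "sqrt (C 0) = q" using A0 C0 \<open>0 < r\<close> \<open>0 < q\<close> by simp_all
  have sqrtA': "((\<lambda>s. sqrt (A s)) has_real_derivative B 0 / r) (at 0)"
    using DERIV_chain2[OF DERIV_real_sqrt A'] A0 \<open>0 < r\<close> sA by (simp add: field_simps)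
  have sqrtC': "((\<lambda>s. sqrt (C s)) has_real_derivative P0 / q) (at 0)"
    using DERIV_chain2[OF DERIV_real_sqrt C'] C0 \<open>0 < q\<close> sC by (simp add: field_simps)
  have term1': "((\<lambda>s. B s / sqrt (A s)) has_real_derivative dB / r - B 0 * B 0 / r ^ 3) (at 0)"
    using DERIV_divide[OF B' sqrtA'] sA \<open>0 < r\<close>
    by (rule_tac DERIV_cong) (auto simp: field_simps power2_eq_square power3_eq_cube)
  have N_at_0: "G * sqrt (1 - A 0) - (B 0)\<^sup>2 / (1 - A 0) - C 0 = N0" using N0 A0 C0 by simp
  have N': "((\<lambda>s. G * sqrt (1 - A s) - (B s)\<^sup>2 / (1 - A s) - C s) has_real_derivative dN) (at 0)"
    using accel_coefficient_has_real_derivative[OF A' B' C' A0 \<open>r\<^sup>2 < 1\<close>] by (simp add: dN)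
  have P': "((\<lambda>s. (G * sqrt (1 - A s) - (B s)\<^sup>2 / (1 - A s) - C s) * B s + lam * (ph s * B s - ps s))
      has_real_derivative dP) (at 0)"
    using DERIV_add[OF DERIV_mult[OF N' B'] DERIV_cmult[OF DERIV_diff[OF DERIV_mult[OF ph' B'] ps'], of lam]]
    unfolding N_at_0 dP by (rule_tac DERIV_cong) (auto simp: algebra_simps)
  have P_at_0: "(G * sqrt (1 - A 0) - (B 0)\<^sup>2 / (1 - A 0) - C 0) * B 0 + lam * (ph 0 * B 0 - ps 0) = P0"
    using N_at_0 P0 by simp
  have term2': "((\<lambda>s. ((G * sqrt (1 - A s) - (B s)\<^sup>2 / (1 - A s) - C s) * B s
        + lam * (ph s * B s - ps s)) / sqrt (C s)) has_real_derivative dP / q - P0 * P0 / q ^ 3) (at 0)"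
    using DERIV_divide[OF P' sqrtC'] unfolding P_at_0 sC using \<open>0 < q\<close>
    by (rule_tac DERIV_cong) (auto simp: field_simps power2_eq_square power3_eq_cube)
  show ?thesis
    using DERIV_add[OF DERIV_cmult[OF term1', of b] term2'] by (simp add: algebra_simps)
qed

lemma gauge_has_real_derivative_near:
  fixes X P V :: "real \<Rightarrow> 'a::real_inner"
  assumes "0 < \<epsilon>"
    and X': "\<And>s. \<bar>s\<bar> < \<epsilon> \<Longrightarrow> (X has_vector_derivative P s) (at s)"
    and P': "\<And>s. \<bar>s\<bar> < \<epsilon> \<Longrightarrow> (P has_vector_derivative V s) (at s)"
    and "X 0 \<noteq> 0" "P 0 \<noteq> 0"
  obtains \<epsilon>' where "0 < \<epsilon>'" "\<epsilon>' \<le> \<epsilon>"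
    "\<And>s. \<bar>s\<bar> < \<epsilon>' \<Longrightarrow> ((\<lambda>s. b * norm (X s) + norm (P s) - b) has_real_derivative
           b * ((X s \<bullet> P s) / norm (X s)) + (P s \<bullet> V s) / norm (P s)) (at s)"
proof -
  obtain \<delta>1 where "\<delta>1 > 0" and \<delta>1: "\<And>s. dist 0 s < \<delta>1 \<Longrightarrow> X s \<noteq> 0"
    using continuous_at_avoid[OF has_vector_derivative_continuous[OF X'[of 0]] \<open>X 0 \<noteq> 0\<close>] \<open>0 < \<epsilon>\<close>
    by auto
  obtain \<delta>2 where "\<delta>2 > 0" and \<delta>2: "\<And>s. dist 0 s < \<delta>2 \<Longrightarrow> P s \<noteq> 0"
    using continuous_at_avoid[OF has_vector_derivative_continuous[OF P'[of 0]] \<open>P 0 \<noteq> 0\<close>] \<open>0 < \<epsilon>\<close>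
    by auto
  show ?thesis
  proof
    show "0 < min \<epsilon> (min \<delta>1 \<delta>2)" "min \<epsilon> (min \<delta>1 \<delta>2) \<le> \<epsilon>"
      using \<open>0 < \<epsilon>\<close> \<open>\<delta>1 > 0\<close> \<open>\<delta>2 > 0\<close> by auto
    fix s assume s: "\<bar>s\<bar> < min \<epsilon> (min \<delta>1 \<delta>2)"
    then have "X s \<noteq> 0" "P s \<noteq> 0" using \<delta>1 \<delta>2 by (auto simp: dist_real_def)
    then have "((\<lambda>s. b * norm (X s) + norm (P s) - b) has_real_derivative
           b * ((X s \<bullet> P s) / norm (X s)) + (P s \<bullet> V s) / norm (P s) - 0) (at s)"
      using s by (intro DERIV_diff DERIV_add DERIV_cmult DERIV_const has_real_derivative_norm_curve X' P') auto
    then show "((\<lambda>s. b * norm (X s) + norm (P s) - b) has_real_derivative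
           b * ((X s \<bullet> P s) / norm (X s)) + (P s \<bullet> V s) / norm (P s)) (at s)"
      by simp
  qed
qed

lemma no_Delta_tangency_off_origin:
  fixes X P F F' :: "real \<Rightarrow> real^2" and \<tau> :: "real \<Rightarrow> real"
  assumes "0 < \<epsilon>"
    and X': "\<And>s. \<bar>s\<bar> < \<epsilon> \<Longrightarrow> (X has_vector_derivative P s) (at s)"
    and P': "\<And>s. \<bar>s\<bar> < \<epsilon> \<Longrightarrow> (P has_vector_derivative vfield_accel G F lam (\<tau> s) (X s) (P s)) (at s)"
    and \<tau>': "\<And>s. \<bar>s\<bar> < \<epsilon> \<Longrightarrow> (\<tau> has_real_derivative 1) (at s)"
    and F': "\<And>t. (F has_vector_derivative F' t) (at t)"
    and F_bound: "\<And>t. norm (F t) \<le> M" and F'_bound: "\<And>t. norm (F' t) \<le> M1"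
    and in_E: "\<And>s. \<bar>s\<bar> < \<epsilon> \<Longrightarrow> norm (X s) \<le> a \<and> b * norm (X s) + norm (P s) \<le> b"
    and "X 0 \<noteq> 0" and on_Delta: "b * norm (X 0) + norm (P 0) = b"
    and "a < 1" and "0 < G" and "0 \<le> lam" "lam \<le> 1" and "large_b a G M M1 b"
  shows False
proof -
  define r q where "r = norm (X 0)" and "q = norm (P 0)"
  have "1 \<le> b" using \<open>large_b a G M M1 b\<close> by (simp add: large_b_def)
  have "0 < r" "r \<le> a" using \<open>X 0 \<noteq> 0\<close> in_E[of 0] \<open>0 < \<epsilon>\<close> by (simp_all add: r_def)
  then have "r < 1" "q = b * (1 - r)" using \<open>a < 1\<close> on_Delta by (simp_all add: r_def q_def algebra_simps)
  then have "0 < q" using \<open>1 \<le> b\<close> by simp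
  define A B C where "A s = X s \<bullet> X s" and "B s = X s \<bullet> P s" and "C s = P s \<bullet> P s" for s
  define ph ps where "ph s = X s \<bullet> F (\<tau> s)" and "ps s = P s \<bullet> F (\<tau> s)" for s
  define N where "N s = G * sqrt (1 - A s) - (B s)\<^sup>2 / (1 - A s) - C s" for s
  define Pf where "Pf s = N s * B s + lam * (ph s * B s - ps s)" for s
  have P_accel: "P s \<bullet> vfield_accel G F lam (\<tau> s) (X s) (P s) = Pf s" for s
    unfolding Pf_def N_def inner_vfield_accel A_def B_def C_def ph_def ps_def by (simp add: inner_commute)
  obtain \<epsilon>' where "0 < \<epsilon>'" "\<epsilon>' \<le> \<epsilon>" and gauge':
    "\<And>s. \<bar>s\<bar> < \<epsilon>' \<Longrightarrow> ((\<lambda>s. b * norm (X s) + norm (P s) - b) has_real_derivative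
           b * B s / sqrt (A s) + Pf s / sqrt (C s)) (at s)"
    using gauge_has_real_derivative_near[OF \<open>0 < \<epsilon>\<close> X' P' \<open>X 0 \<noteq> 0\<close>, of b] \<open>0 < q\<close>
    unfolding P_accel A_def B_def C_def norm_eq_sqrt_inner[symmetric] q_def by auto
  have "0 \<in> {-\<epsilon><..<\<epsilon>}" using \<open>0 < \<epsilon>\<close> by simp
  then have A': "(A has_real_derivative 2 * B 0) (at 0)" and C': "(C has_real_derivative 2 * Pf 0) (at 0)"
    and B': "(B has_real_derivative X 0 \<bullet> vfield_accel G F lam (\<tau> 0) (X 0) (P 0) + P 0 \<bullet> P 0) (at 0)"
    using has_real_derivative_inner[OF X' X', of 0] has_real_derivative_inner[OF P' P', of 0]
      has_real_derivative_inner[OF X' P', of 0] P_accel[of 0]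
    unfolding A_def B_def C_def by (simp_all add: inner_commute)
  have F\<tau>': "((\<lambda>s. F (\<tau> s)) has_vector_derivative F' (\<tau> 0)) (at 0)"
    using vector_diff_chain_at[OF \<tau>'[unfolded has_real_derivative_iff_has_vector_derivative] F']
      \<open>0 < \<epsilon>\<close> by (simp add: o_def)
  have ph': "(ph has_real_derivative ps 0 + X 0 \<bullet> F' (\<tau> 0)) (at 0)"
    using has_real_derivative_inner[OF X' F\<tau>'] \<open>0 < \<epsilon>\<close> unfolding ph_def ps_def by (simp add: add.commute)
  have ps': "(ps has_real_derivative N 0 * ph 0 + lam * ((ph 0)\<^sup>2 - F (\<tau> 0) \<bullet> F (\<tau> 0)) + P 0 \<bullet> F' (\<tau> 0)) (at 0)"
    using has_real_derivative_inner[OF P' F\<tau>'] inner_F_vfield_accel \<open>0 < \<epsilon>\<close>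
    unfolding ps_def N_def A_def B_def C_def ph_def by (simp add: add.commute)
  have max: "b * norm (X s) + norm (P s) - b \<le> b * norm (X 0) + norm (P 0) - b" if "\<bar>s\<bar> < \<epsilon>'" for s
    using in_E[of s] that \<open>\<epsilon>' \<le> \<epsilon>\<close> on_Delta by simp
  have A0: "A 0 = r\<^sup>2" and C0: "C 0 = q\<^sup>2" by (simp_all add: A_def C_def r_def q_def power2_norm_eq_inner)
  have N0: "N 0 = G * sqrt (1 - r\<^sup>2) - (B 0)\<^sup>2 / (1 - r\<^sup>2) - q\<^sup>2" using A0 C0 by (simp add: N_def)
  define ch et Ph where "ch = X 0 \<bullet> F' (\<tau> 0)" and "et = P 0 \<bullet> F' (\<tau> 0)" and "Ph = F (\<tau> 0) \<bullet> F (\<tau> 0)"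
  define dB where "dB = X 0 \<bullet> vfield_accel G F lam (\<tau> 0) (X 0) (P 0) + P 0 \<bullet> P 0"
  define dN where "dN = - G * B 0 / sqrt (1 - r\<^sup>2) - (2 * B 0 * dB * (1 - r\<^sup>2) + 2 * B 0 ^ 3) / (1 - r\<^sup>2)\<^sup>2 - 2 * Pf 0"
  define dP where "dP = dN * B 0 + N 0 * dB
    + lam * ((ps 0 + ch) * B 0 + ph 0 * dB - (N 0 * ph 0 + lam * ((ph 0)\<^sup>2 - Ph) + et))"
  have "((\<lambda>s. b * B s / sqrt (A s) + ((G * sqrt (1 - A s) - (B s)\<^sup>2 / (1 - A s) - C s) * B s
            + lam * (ph s * B s - ps s)) / sqrt (C s)) has_real_derivative
      b * (dB / r - B 0 * B 0 / r ^ 3) + dP / q - Pf 0 * Pf 0 / q ^ 3) (at 0)"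
    by (rule gauge_derivative_has_real_derivative[OF A' B'[folded dB_def] C' ph' ps' A0 C0
          \<open>0 < r\<close> \<open>0 < q\<close> \<open>r < 1\<close> N0 Pf_def[of 0] dN_def])
       (simp add: dP_def ch_def et_def Ph_def)
  then have g'': "((\<lambda>s. b * B s / sqrt (A s) + Pf s / sqrt (C s)) has_real_derivative
      b * (dB / r - B 0 * B 0 / r ^ 3) + dP / q - Pf 0 * Pf 0 / q ^ 3) (at 0)"
    by (simp only: Pf_def N_def)
  have "b * B 0 / sqrt (A 0) + Pf 0 / sqrt (C 0) = 0"
    using DERIV_local_max[OF gauge'[of 0] \<open>0 < \<epsilon>'\<close>] max \<open>0 < \<epsilon>'\<close> by simp
  then have critical: "b * B 0 / r + Pf 0 / q = 0" using A0 C0 \<open>0 < r\<close> \<open>0 < q\<close> by simp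
  have dB_eq: "dB = q\<^sup>2 + N 0 * r\<^sup>2 + lam * ph 0 * (r\<^sup>2 - 1)"
    using inner_vfield_accel[of "X 0" G F lam "\<tau> 0" "X 0" "P 0"] A0 C0
    unfolding dB_def N_def A_def B_def C_def ph_def by (simp add: inner_commute algebra_simps)
  have "\<bar>B 0\<bar> \<le> r * q" using Cauchy_Schwarz_ineq2[of "X 0" "P 0"] by (simp add: B_def r_def q_def)
  moreover have "\<bar>ph 0\<bar> \<le> r * M" "\<bar>ps 0\<bar> \<le> q * M" "\<bar>ch\<bar> \<le> r * M1" "\<bar>et\<bar> \<le> q * M1"
    using abs_inner_le_norm_bound[OF F_bound] abs_inner_le_norm_bound[OF F'_bound]
    by (simp_all add: ph_def ps_def ch_def et_def r_def q_def)
  moreover have "Ph \<le> M\<^sup>2"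
    using power_mono[OF F_bound[of "\<tau> 0"] norm_ge_zero, of 2] by (simp add: Ph_def power2_norm_eq_inner)
  moreover have "0 \<le> M" "0 \<le> M1" using F_bound[of 0] F'_bound[of 0] by (meson norm_ge_zero order_trans)+
  ultimately interpret Delta_touching a b G M M1 lam r q "B 0" "ph 0" "ps 0" ch et Ph "N 0" "Pf 0" dB dN dP
    using assms(10-) \<open>0 < r\<close> \<open>r \<le> a\<close> \<open>q = b * (1 - r)\<close> N0 Pf_def[of 0] dB_eq dN_def dP_def critical
    by unfold_locales (simp_all add: Ph_def)
  show False
    using local_max_imp_second_derivative_nonpos[OF \<open>0 < \<epsilon>'\<close> max gauge' g''] second_derivative_pos
    by linarith
qed

lemma exists_large_b:
  assumes "0 < a" "a < 1" "0 \<le> M" "0 \<le> M1" "0 < G"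
  obtains b where "large_b a G M M1 b"
proof -
  define d0 where "d0 = 1 - a\<^sup>2"
  define E3 where "E3 = 16*M\<^sup>2 + (16*M\<^sup>2 + deriv_error_bound a G M M1 + M + M1)/(1-a)"
  define c where "c = (1 - a)\<^sup>2 * d0 / 8"
  define K where "K = 1 + M + 4 * M / (1 - a) + 16 * M\<^sup>2 / d0 + E3"
  have "a\<^sup>2 < 1" using assms by (simp add: power_less_one_iff abs_less_iff)
  then have "0 < d0" "d0 \<le> 1" by (simp_all add: d0_def)
  have "(1 - a)\<^sup>2 \<le> 1" using assms by (simp add: power_le_one)
  then have "(1 - a)\<^sup>2 * d0 \<le> 1 * 1" using \<open>0 < d0\<close> \<open>d0 \<le> 1\<close> by (intro mult_mono) auto
  then have "0 < c" "c \<le> 1" using \<open>0 < d0\<close> \<open>a < 1\<close> by (simp_all add: c_def)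
  have "0 \<le> deriv_error_bound a G M M1"
    unfolding deriv_error_bound_def using assms \<open>0 < d0\<close> by (simp add: d0_def)
  then have "0 \<le> E3" using assms unfolding E3_def by simp
  have "0 \<le> 16 * M\<^sup>2 / d0" "0 \<le> 4 * M / (1 - a)" using \<open>0 < d0\<close> assms by simp_all
  define b where "b = 1 + K / c"
  have "1 \<le> b" unfolding b_def K_def using \<open>0 < c\<close> \<open>0 \<le> E3\<close> \<open>0 < d0\<close> assms by simp
  have "K < c * b" using \<open>0 < c\<close> by (simp add: b_def distrib_left)
  also have "\<dots> \<le> c * b\<^sup>2" using \<open>1 \<le> b\<close> \<open>0 < c\<close> by (simp add: power2_eq_square)
  finally have K_lt: "K < c * b\<^sup>2" .
  moreover have "c * b\<^sup>2 \<le> b\<^sup>2" using \<open>c \<le> 1\<close> \<open>0 < c\<close> by (intro mult_left_le_one_le) auto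
  ultimately have "4 * M / (1 - a) \<le> b\<^sup>2" "M < b\<^sup>2"
    using \<open>0 \<le> E3\<close> \<open>0 \<le> 16 * M\<^sup>2 / d0\<close> \<open>0 \<le> 4 * M / (1 - a)\<close> assms unfolding K_def by linarith+
  then have "4 * M \<le> b\<^sup>2 * (1 - a)" using \<open>a < 1\<close> by (simp add: divide_le_eq)
  moreover have scale: "b\<^sup>2 * (1-a)\<^sup>2 * d0 / 2 = 4 * (c * b\<^sup>2)" "b\<^sup>2 * (1-a)\<^sup>2 * d0 / 8 = c * b\<^sup>2"
    by (simp_all add: c_def)
  ultimately have "large_b a G M M1 b"
    using \<open>1 \<le> b\<close> \<open>M < b\<^sup>2\<close> K_lt \<open>0 \<le> E3\<close> \<open>0 \<le> 16 * M\<^sup>2 / d0\<close> \<open>0 \<le> 4 * M / (1 - a)\<close> \<open>0 < c\<close> assms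
    unfolding large_b_def d0_def[symmetric] E3_def[symmetric] scale K_def
    by (intro conjI; linarith)
  then show ?thesis by (rule that)
qed

lemma Gamma_Delta_eq:
  assumes "a < 1"
  shows "UNIV \<times> (Gamma a \<inter> Delta b) =
    {z :: state. norm (fst (snd z)) \<le> a \<and> b * norm (fst (snd z)) + norm (snd (snd z)) \<le> b}"
  using assms by (auto simp: Gamma_def Delta_def)

lemma closed_Gamma_Delta:
  assumes "a < 1"
  shows "closed (UNIV \<times> (Gamma a \<inter> Delta b) :: state set)"
  unfolding Gamma_Delta_eq[OF assms] by (intro closed_Collect_conj closed_Collect_le continuous_intros)

lemma frontier_Gamma_Delta:
  fixes t :: real
  assumes "a < 1" and "(t, x, p) \<in> frontier (UNIV \<times> (Gamma a \<inter> Delta b))"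
  shows "norm x = a \<or> (norm x < a \<and> b * norm x + norm p = b)"
proof -
  let ?E = "UNIV \<times> (Gamma a \<inter> Delta b)"
  let ?U = "{z :: state. norm (fst (snd z)) < a \<and> b * norm (fst (snd z)) + norm (snd (snd z)) < b}"
  have "open ?U" by (intro open_Collect_conj open_Collect_less continuous_intros)
  moreover have "?U \<subseteq> ?E" unfolding Gamma_Delta_eq[OF \<open>a < 1\<close>] by auto
  ultimately have "?U \<subseteq> interior ?E" by (simp add: interior_maximal)
  moreover have "(t, x, p) \<notin> interior ?E" using assms(2) by (simp add: frontier_def)
  ultimately have "(t, x, p) \<notin> ?U" by blast
  moreover have "(t, x, p) \<in> ?E"
    using assms(2) closed_Gamma_Delta[OF \<open>a < 1\<close>] by (simp add: frontier_def closure_closed)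
  ultimately show ?thesis unfolding Gamma_Delta_eq[OF \<open>a < 1\<close>] by auto
qed

lemma m_fun_eq: "m_fun a z = (norm (fst (snd z)))\<^sup>2 / 2 - a\<^sup>2 / 2"
  by (cases z) (simp add: m_fun_def)

lemma Gamma_Delta_subset_Omega: "a < 1 \<Longrightarrow> UNIV \<times> (Gamma a \<inter> Delta b) \<subseteq> (UNIV \<times> Omega :: state set)"
  by (auto simp: Gamma_def Delta_def Omega_def)

lemma no_trajectory_along_frontier_Gamma_Delta:
  fixes F F' :: "real \<Rightarrow> real^2"
  assumes "0 < G" and "a < 1" and "0 \<le> lam" "lam \<le> 1"
    and F': "\<And>t. (F has_vector_derivative F' t) (at t)"
    and F_bound: "\<And>t. norm (F t) \<le> M" and F'_bound: "\<And>t. norm (F' t) \<le> M1"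
    and b: "large_b a G M M1 b"
    and curv: "curvature_bound_function (vfield G F lam) (UNIV \<times> Omega) (m_fun a)"
    and "0 < \<epsilon>" and "y 0 \<in> frontier (UNIV \<times> (Gamma a \<inter> Delta b))"
    and y': "\<And>s. \<bar>s\<bar> < \<epsilon> \<Longrightarrow> (y has_vector_derivative vfield G F lam (y s)) (at s)"
    and y_in: "\<And>s. \<bar>s\<bar> < \<epsilon> \<Longrightarrow> y s \<in> UNIV \<times> (Gamma a \<inter> Delta b)"
  shows False
proof -
  define X P \<tau> where "X = (\<lambda>s. fst (snd (y s)))" and "P = (\<lambda>s. snd (snd (y s)))"
    and "\<tau> = (\<lambda>s. fst (y s))"
  have X': "\<And>s. \<bar>s\<bar> < \<epsilon> \<Longrightarrow> (X has_vector_derivative P s) (at s)"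
    unfolding X_def P_def by (rule vfield_trajectory_components(2)[OF y'])
  have P': "\<And>s. \<bar>s\<bar> < \<epsilon> \<Longrightarrow> (P has_vector_derivative vfield_accel G F lam (\<tau> s) (X s) (P s)) (at s)"
    unfolding X_def P_def \<tau>_def by (rule vfield_trajectory_components(3)[OF y'])
  have \<tau>': "\<And>s. \<bar>s\<bar> < \<epsilon> \<Longrightarrow> (\<tau> has_real_derivative 1) (at s)"
    unfolding \<tau>_def by (rule vfield_trajectory_components(1)[OF y'])
  have in_E: "\<And>s. \<bar>s\<bar> < \<epsilon> \<Longrightarrow> norm (X s) \<le> a \<and> b * norm (X s) + norm (P s) \<le> b"
    using y_in unfolding Gamma_Delta_eq[OF \<open>a < 1\<close>] X_def P_def by blast
  have "\<bar>0::real\<bar> < \<epsilon>" using \<open>0 < \<epsilon>\<close> by simp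
  have "norm (X 0) = a \<or> (norm (X 0) < a \<and> b * norm (X 0) + norm (P 0) = b)"
    using frontier_Gamma_Delta[OF \<open>a < 1\<close>, of "\<tau> 0"] assms(11)
    by (simp add: X_def P_def \<tau>_def)
  then consider "norm (X 0) = a" | "X 0 = 0" "b * norm (X 0) + norm (P 0) = b"
    | "X 0 \<noteq> 0" "b * norm (X 0) + norm (P 0) = b" by blast
  then show False
  proof cases
    case 1
    have m_le: "m_fun a (y s) \<le> 0" if "\<bar>s\<bar> < \<epsilon>" for s
      using power_mono[of "norm (X s)" a 2] in_E[OF that] by (simp add: m_fun_eq X_def)
    have m0: "m_fun a (y 0) = 0" using 1 by (simp add: m_fun_eq X_def)
    have "norm (fst (snd (y 0))) < 1" using 1 \<open>a < 1\<close> by (simp add: X_def)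
    then have "vfield G F lam differentiable (at (y 0))"
      using vfield_differentiable[of "fst (snd (y 0))" F F' G lam "fst (y 0)" "snd (snd (y 0))"] F'
      by simp
    then obtain Dv where v': "(vfield G F lam has_derivative Dv) (at (y 0))"
      unfolding differentiable_def by blast
    have "y s \<in> UNIV \<times> Omega" if "\<bar>s\<bar> < \<epsilon>" for s
      using subsetD[OF Gamma_Delta_subset_Omega[OF \<open>a < 1\<close>] y_in[OF that]] .
    from curvature_bound_function_no_touching[OF curv \<open>0 < \<epsilon>\<close> y' this m_le m0 v']
    show False .
  next
    case 2
    have "norm (P 0) = b" "0 < b" "M < b\<^sup>2" using 2 b by (simp_all add: large_b_def)
    show False
    proof (rule no_Delta_tangency_at_origin[OF \<open>0 < \<epsilon>\<close> X'[OF \<open>\<bar>0::real\<bar> < \<epsilon>\<close>]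
          P'[OF \<open>\<bar>0::real\<bar> < \<epsilon>\<close>] \<open>X 0 = 0\<close> \<open>norm (P 0) = b\<close> \<open>0 < b\<close> _ F_bound
          \<open>M < b\<^sup>2\<close> \<open>0 \<le> lam\<close> \<open>lam \<le> 1\<close>])
      show "b * norm (X s) + norm (P s) \<le> b" if "\<bar>s\<bar> < \<epsilon>" for s using in_E[OF that] by simp
    qed
  next
    case 3
    show False
      using no_Delta_tangency_off_origin[OF \<open>0 < \<epsilon>\<close> X' P' \<tau>' F' F_bound F'_bound in_E 3
          \<open>a < 1\<close> \<open>0 < G\<close> \<open>0 \<le> lam\<close> \<open>lam \<le> 1\<close> b] .
  qed
qed

lemma bound_set_Gamma_Delta:
  fixes F F' :: "real \<Rightarrow> real^2"
  assumes "0 < G" and "a < 1" and "0 \<le> lam" "lam \<le> 1"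
    and F': "\<And>t. (F has_vector_derivative F' t) (at t)"
    and F_bound: "\<And>t. norm (F t) \<le> M" and F'_bound: "\<And>t. norm (F' t) \<le> M1"
    and b: "large_b a G M M1 b"
    and curv: "curvature_bound_function (vfield G F lam) (UNIV \<times> Omega) (m_fun a)"
  shows "bound_set (vfield G F lam) (UNIV \<times> Omega) (UNIV \<times> (Gamma a \<inter> Delta b))"
  unfolding bound_set_def
proof (intro conjI allI impI notI)
  note E_sub = Gamma_Delta_subset_Omega[OF \<open>a < 1\<close>]
  show "UNIV \<times> (Gamma a \<inter> Delta b) \<subseteq> (UNIV \<times> Omega :: state set)" by (rule E_sub)
  show "closedin (top_of_set (UNIV \<times> Omega)) (UNIV \<times> (Gamma a \<inter> Delta b) :: state set)"
    by (rule closed_subset[OF E_sub closed_Gamma_Delta[OF \<open>a < 1\<close>]])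
  fix \<epsilon> :: real
  assume "0 < \<epsilon>" and "\<exists>z\<in>frontier (UNIV \<times> (Gamma a \<inter> Delta b)). \<exists>y. y 0 = z \<and>
    (\<forall>s\<in>{- \<epsilon><..<\<epsilon>}. (y has_vector_derivative vfield G F lam (y s)) (at s)
        \<and> y s \<in> UNIV \<times> (Gamma a \<inter> Delta b))"
  then obtain z y where "z \<in> frontier (UNIV \<times> (Gamma a \<inter> Delta b))" and "y 0 = z"
    and y': "\<And>s. \<bar>s\<bar> < \<epsilon> \<Longrightarrow> (y has_vector_derivative vfield G F lam (y s)) (at s)"
    and y_in: "\<And>s. \<bar>s\<bar> < \<epsilon> \<Longrightarrow> y s \<in> UNIV \<times> (Gamma a \<inter> Delta b)"
    by (auto simp: abs_less_iff)
  then have "y 0 \<in> frontier (UNIV \<times> (Gamma a \<inter> Delta b))" by simp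
  then show False using y' y_in
    by (rule no_trajectory_along_frontier_Gamma_Delta[OF assms \<open>0 < \<epsilon>\<close>])
qed

theorem lemma4p2:
  fixes G T a :: real and F :: "real \<Rightarrow> real^2"
  assumes "G > 0" and "T > 0"
    and "\<forall>t. F (t + T) = F t"
    and "\<exists>F'. (\<forall>t. (F has_vector_derivative F' t) (at t)) \<and> continuous_on UNIV F'"
    and "0 < a" and "a < 1"
    and "\<forall>lam\<in>{0..1}. curvature_bound_function (vfield G F lam) (UNIV \<times> Omega) (m_fun a)"
  shows "\<exists>b>0. \<forall>lam\<in>{0..1}.
           bound_set (vfield G F lam) (UNIV \<times> Omega) (UNIV \<times> (Gamma a \<inter> Delta b))"
proof -
  obtain F' where F': "\<And>t. (F has_vector_derivative F' t) (at t)" and "continuous_on UNIV F'"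
    using assms(4) by blast
  have "continuous_on UNIV F"
    using F' by (intro continuous_at_imp_continuous_on) (auto intro: has_vector_derivative_continuous)
  obtain M where M: "\<And>t. norm (F t) \<le> M"
    using periodic_continuous_imp_bounded[OF \<open>continuous_on UNIV F\<close> assms(3,2)] by blast
  obtain M1 where M1: "\<And>t. norm (F' t) \<le> M1"
    using periodic_continuous_imp_bounded[OF \<open>continuous_on UNIV F'\<close>
        periodic_vector_derivative[OF F' assms(3)] assms(2)] by blast
  have "0 \<le> M" "0 \<le> M1" using M[of 0] M1[of 0] by (meson norm_ge_zero order_trans)+
  then obtain b where b: "large_b a G M M1 b"
    using exists_large_b \<open>0 < a\<close> \<open>a < 1\<close> \<open>G > 0\<close> by blast
  then have "b > 0" by (simp add: large_b_def)
  moreover have "bound_set (vfield G F lam) (UNIV \<times> Omega) (UNIV \<times> (Gamma a \<inter> Delta b))"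
    if "lam \<in> {0..1}" for lam
    using bound_set_Gamma_Delta[OF \<open>G > 0\<close> \<open>a < 1\<close> _ _ F' M M1 b] assms(7) that by auto
  ultimately show ?thesis by blast
qed

end
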